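(* Let $N=2^n$ and let $\mathcal{A}=P(U_\omega)$ be an $N\times N$ diagonal matrix, where $P\in\mathbb{C}[x]$ has $\deg P=d$ and $|P(x)|^2\le c$ for all $x\in\mathbb{T}$. Then $\mathcal{A}/\sqrt{c}$ can be implemented (as the top-left block, with respect to one ancilla qubit, of a unitary circuit) using $\mathcal{O}(d\log N)$ 1- and 2-qubit gates.
   Context: $\mathbb{T}=\{x\in\mathbb{C}:|x|=1\}$, $\omega_N=e^{2\pi i/N}$, and $U_\omega=\sum_{j=0}^{N-1}\omega_N^j|j\rangle\langle j|$ where $|j\rangle$ is the computational basis state given by the binary representation of $j$ on $n=\log N$ qubits. Gates are arbitrary 1- and 2-qubit unitaries. *)

theory Defs
  imports Complex_Main "HOL-Computational_Algebra.Polynomial"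
begin

text \<open>Complex square matrices of dimension D are represented as functions
  nat => nat => complex; only entries with indices below D are meaningful.\<close>

type_synonym cmat = "nat \<Rightarrow> nat \<Rightarrow> complex"

definition mmult :: "nat \<Rightarrow> cmat \<Rightarrow> cmat \<Rightarrow> cmat" where
  "mmult D A B = (\<lambda>i j. \<Sum>k<D. A i k * B k j)"

definition idmat :: "nat \<Rightarrow> cmat" where
  "idmat D = (\<lambda>i j. if i = j \<and> i < D then 1 else 0)"

fun mpow :: "nat \<Rightarrow> cmat \<Rightarrow> nat \<Rightarrow> cmat" where
  "mpow D M 0 = idmat D"
| "mpow D M (Suc k) = mmult D M (mpow D M k)"

definition poly_mat :: "nat \<Rightarrow> complex poly \<Rightarrow> cmat \<Rightarrow> cmat" where
  "poly_mat D P M = (\<lambda>i j. \<Sum>k\<le>degree P. coeff P k * mpow D M k i j)"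

definition unitary_mat :: "nat \<Rightarrow> cmat \<Rightarrow> bool" where
  "unitary_mat D U \<longleftrightarrow>
     (\<forall>i<D. \<forall>j<D. (\<Sum>k<D. cnj (U k i) * U k j) = (if i = j then 1 else 0))"

definition omega :: "nat \<Rightarrow> complex" where
  "omega N = exp (2 * of_real pi * \<i> / of_nat N)"

definition U_omega :: "nat \<Rightarrow> cmat" where
  "U_omega N = (\<lambda>i j. if i = j \<and> i < N then omega N ^ j else 0)"

definition qbit :: "nat \<Rightarrow> nat \<Rightarrow> nat" where
  "qbit x i = (x div 2 ^ i) mod 2"

datatype gate = G1 nat cmat | G2 nat nat cmat

fun valid_gate :: "nat \<Rightarrow> gate \<Rightarrow> bool" where
  "valid_gate m (G1 q U) \<longleftrightarrow> q < m \<and> unitary_mat 2 U"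
| "valid_gate m (G2 q1 q2 U) \<longleftrightarrow> q1 < m \<and> q2 < m \<and> q1 \<noteq> q2 \<and> unitary_mat 4 U"

fun gate_mat :: "nat \<Rightarrow> gate \<Rightarrow> cmat" where
  "gate_mat m (G1 q U) = (\<lambda>x y.
     if x < 2 ^ m \<and> y < 2 ^ m \<and> (\<forall>i. i \<noteq> q \<longrightarrow> qbit x i = qbit y i)
     then U (qbit x q) (qbit y q) else 0)"
| "gate_mat m (G2 q1 q2 U) = (\<lambda>x y.
     if x < 2 ^ m \<and> y < 2 ^ m \<and> (\<forall>i. i \<noteq> q1 \<and> i \<noteq> q2 \<longrightarrow> qbit x i = qbit y i)
     then U (2 * qbit x q1 + qbit x q2) (2 * qbit y q1 + qbit y q2) else 0)"

text \<open>The unitary of a circuit g1 g2 ... gk (applied in list order, i.e. U = G_k ... G_1).\<close>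
definition circuit_mat :: "nat \<Rightarrow> gate list \<Rightarrow> cmat" where
  "circuit_mat m gs = foldl (\<lambda>M g. mmult (2 ^ m) (gate_mat m g) M) (idmat (2 ^ m)) gs"

text \<open>W (on n+1 qubits, ancilla = most significant qubit n) block-encodes the
  2^n x 2^n matrix B: the top-left block of W (ancilla in |0>) equals B.\<close>
definition top_left_block :: "nat \<Rightarrow> cmat \<Rightarrow> cmat \<Rightarrow> bool" where
  "top_left_block n W B \<longleftrightarrow> (\<forall>j<2 ^ n. \<forall>k<2 ^ n. W j k = B j k)"

end

theory Submission
  imports Defs "HOL-Analysis.Analysis" "HOL-Computational_Algebra.Fundamental_Theorem_Algebra"
begin

(* Scaling P by 1 / sqrt c gives p with |p| <= 1 on the unit circle. The Laurent polynomial
   1 - |p|^2 is nonnegative on the circle, so by the Fejer-Riesz theorem it equals |q|^2 for a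
   polynomial q of degree at most d. Then (p, q) is, on the circle, the first column of
   R_0 S(z) R_1 S(z) ... S(z) R_d with S(z) = diag(z, 1) and d + 1 constant unitaries R_k
   (quantum signal processing): one factor is peeled off per degree, using that the leading
   and the constant coefficient vectors of (p, q) are orthogonal.
   On n system qubits plus one ancilla, S(omega^j) controlled by the basis state |j> factors
   into n two-qubit controlled phases, one per bit of j, and each R_k is a one-qubit gate on
   the ancilla. The resulting circuit has (d + 1) + d n gates and is block diagonal with the
   2 x 2 blocks R_0 S(omega^j) ... R_d, whose top-left entries p(omega^j) form the diagonal
   of P(U_omega) / sqrt c. *)

section \<open>Polynomials on the unit circle\<close>

lemma unit_circle_cnj: "cmod z = 1 \<Longrightarrow> cnj z = inverse z"
  using complex_norm_square[of z] by (simp add: inverse_unique)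

lemma unit_circle_islimpt: "cmod a = 1 \<Longrightarrow> a islimpt sphere (0::complex) 1"
proof (rule connected_imp_perfect)
  show "connected (sphere (0::complex) 1)" by (rule connected_sphere) simp
  have "1 \<in> sphere (0::complex) 1" "-1 \<in> sphere (0::complex) 1" by simp_all
  then show "sphere (0::complex) 1 \<noteq> {x}" for x
    by (metis one_neq_neg_one singletonD)
qed simp

lemma poly_eqI_unit_circle:
  fixes p q :: "complex poly"
  assumes "\<And>z. cmod z = 1 \<Longrightarrow> poly p z = poly q z"
  shows "p = q"
proof (rule ccontr)
  assume "p \<noteq> q"
  then have "finite {z. poly (p - q) z = 0}" by (intro poly_roots_finite) simp
  moreover have "sphere 0 1 \<subseteq> {z. poly (p - q) z = 0}" using assms by auto
  ultimately have "finite (sphere (0::complex) 1)" by (rule finite_subset[rotated])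
  then show False using islimpt_finite unit_circle_islimpt[of 1] by auto
qed

lemma poly_eq_sum_le:
  fixes p :: "'a::comm_semiring_1 poly"
  assumes "degree p \<le> m"
  shows "poly p x = (\<Sum>i\<le>m. coeff p i * x ^ i)"
  by (subst poly_as_sum_of_monoms'[OF assms, symmetric]) (simp add: poly_sum poly_monom)

definition conj_recip :: "nat \<Rightarrow> complex poly \<Rightarrow> complex poly" where
  "conj_recip m p = (\<Sum>k\<le>m. monom (cnj (coeff p k)) (m - k))"

lemma coeff_conj_recip: "coeff (conj_recip m p) k = (if k \<le> m then cnj (coeff p (m - k)) else 0)"
proof -
  have "coeff (conj_recip m p) k = (\<Sum>j\<le>m. if j = m - k \<and> k \<le> m then cnj (coeff p j) else 0)"
    unfolding conj_recip_def coeff_sum coeff_monom by (rule sum.cong) auto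
  then show ?thesis by simp
qed

lemma degree_conj_recip_le: "degree (conj_recip m p) \<le> m"
  by (rule degree_le) (simp add: coeff_conj_recip)

lemma poly_conj_recip:
  assumes "degree p \<le> m" "w \<noteq> 0"
  shows "poly (conj_recip m p) w = w ^ m * cnj (poly p (inverse (cnj w)))"
proof -
  have "poly (conj_recip m p) w = (\<Sum>k\<le>m. w ^ m * (cnj (coeff p k) * inverse w ^ k))"
    unfolding conj_recip_def poly_sum poly_monom
    by (rule sum.cong) (use assms in \<open>auto simp: power_diff field_simps\<close>)
  then show ?thesis by (simp add: poly_eq_sum_le[OF assms(1)] sum_distrib_left)
qed

lemma poly_conj_recip_unit_circle:
  assumes "degree p \<le> m" "cmod z = 1"
  shows "poly (conj_recip m p) z = z ^ m * cnj (poly p z)"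
proof -
  have "z \<noteq> 0" using assms(2) by auto
  then show ?thesis using poly_conj_recip[OF assms(1)] unit_circle_cnj[OF assms(2)] by simp
qed

section \<open>The Fejer-Riesz theorem\<close>

(* The Laurent polynomial sum_{k=-d..d} c_k z^k is encoded by the polynomial R = z^d times it,
   of degree at most 2 d. *)
definition nonneg_on_circle :: "nat \<Rightarrow> complex poly \<Rightarrow> bool" where
  "nonneg_on_circle d R \<longleftrightarrow> (\<forall>z. cmod z = 1 \<longrightarrow> poly R z / z ^ d \<in> \<real>\<^sub>\<ge>\<^sub>0)"

lemma conj_recip_eq_if_nonneg_on_circle:
  assumes deg: "degree R \<le> 2 * d" and R: "nonneg_on_circle d R"
  shows "conj_recip (2 * d) R = R"
proof (rule poly_eqI_unit_circle)
  fix z :: complex assume z: "cmod z = 1"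
  then have "z \<noteq> 0" by auto
  have "poly R z / z ^ d \<in> \<real>" using R z by (auto simp: nonneg_on_circle_def nonneg_Reals_subset_Reals[THEN subsetD])
  then have "cnj (poly R z / z ^ d) = poly R z / z ^ d" by (simp only: Reals_cnj_iff)
  then have "z ^ d * z ^ d * cnj (poly R z) = poly R z"
    using \<open>z \<noteq> 0\<close> by (simp add: unit_circle_cnj[OF z] power_inverse field_simps)
  then have "z ^ (2 * d) * cnj (poly R z) = poly R z" by (simp add: mult_2 power_add)
  then show "poly (conj_recip (2 * d) R) z = poly R z"
    using poly_conj_recip_unit_circle[OF deg z] by simp
qed

lemma nonneg_on_circle_root_multiple:
  assumes a: "cmod a = 1" and R: "nonneg_on_circle d R" and Ra: "poly R a = 0"
  shows "poly (pderiv R) a = 0"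
proof -
  have "a \<noteq> 0" using a by auto
  (* On the real axis F is nonnegative and vanishes at 0, so its derivative D there is zero. *)
  define F where "F = (\<lambda>w. poly R (a * exp (\<i> * w)) / (a * exp (\<i> * w)) ^ d)"
  define D where "D = poly (pderiv R) a * \<i> * a / a ^ d"
  have "(F has_field_derivative D) (at 0)"
    unfolding F_def D_def using \<open>a \<noteq> 0\<close>
    by (auto intro!: derivative_eq_intros DERIV_chain2[OF poly_DERIV] simp: Ra)
  then have F': "((\<lambda>t. F (of_real t)) has_vector_derivative D) (at 0)"
    using has_vector_derivative_real_field[of F D 0] by simp
  have F_nonneg: "F (of_real t) \<in> \<real>\<^sub>\<ge>\<^sub>0" for t
    using R a unfolding F_def nonneg_on_circle_def by (simp add: norm_mult)
  have "Re D = 0"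
    using has_field_derivative_Re[OF F'] by (rule DERIV_local_min[where d=1])
      (use F_nonneg Ra in \<open>auto simp: F_def complex_nonneg_Reals_iff\<close>)
  moreover have "Im D = 0"
  proof -
    have "(\<lambda>t. Im (F (of_real t))) = (\<lambda>_. 0)"
      using F_nonneg by (auto simp: complex_nonneg_Reals_iff)
    then show ?thesis using has_field_derivative_Im[OF F'] DERIV_const DERIV_unique by metis
  qed
  ultimately have "D = 0" by (simp add: complex_eq_iff)
  then show ?thesis using \<open>a \<noteq> 0\<close> by (simp add: D_def)
qed

lemma nonneg_on_circle_if_punctured:
  assumes a: "cmod a = 1" and R: "\<And>z. cmod z = 1 \<Longrightarrow> z \<noteq> a \<Longrightarrow> poly R z / z ^ d \<in> \<real>\<^sub>\<ge>\<^sub>0"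
  shows "nonneg_on_circle d R"
proof -
  let ?f = "\<lambda>z. poly R z / z ^ d"
  have "?f a \<in> \<real>\<^sub>\<ge>\<^sub>0"
  proof (rule Lim_in_closed_set[OF closed_nonneg_Reals_complex _ _ _])
    show "\<forall>\<^sub>F z in at a within sphere 0 1. ?f z \<in> \<real>\<^sub>\<ge>\<^sub>0"
      using R by (auto simp: eventually_at_filter)
    show "\<not> trivial_limit (at a within sphere 0 1)"
      using unit_circle_islimpt[OF a] by (simp add: trivial_limit_within)
    have "isCont ?f a" using a by (auto intro!: continuous_intros)
    then show "(?f \<longlongrightarrow> ?f a) (at a within sphere 0 1)"
      using isContD tendsto_within_subset by blast
  qed
  then show ?thesis using R by (auto simp: nonneg_on_circle_def)
qed

lemma nonneg_on_circle_cancel_factor: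
  assumes R: "nonneg_on_circle (Suc d) R"
    and eq: "\<And>z. cmod z = 1 \<Longrightarrow> poly R z / z ^ Suc d = of_real ((cmod (z - a))\<^sup>2) * (poly R' z / z ^ d)"
  shows "nonneg_on_circle d R'"
proof -
  have off_a: "poly R' z / z ^ d \<in> \<real>\<^sub>\<ge>\<^sub>0" if z: "cmod z = 1" and "z \<noteq> a" for z
  proof -
    have pos: "(cmod (z - a))\<^sup>2 > 0" using \<open>z \<noteq> a\<close> by simp
    obtain r where "r \<ge> 0" "poly R z / z ^ Suc d = of_real r"
      using R z by (auto simp: nonneg_on_circle_def elim: nonneg_Reals_cases)
    then have "poly R' z / z ^ d = of_real (r / (cmod (z - a))\<^sup>2)"
      using eq[OF z] pos by (simp add: field_simps)
    then show ?thesis using \<open>r \<ge> 0\<close> pos by simp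
  qed
  show ?thesis
  proof (cases "cmod a = 1")
    case True
    then show ?thesis using off_a by (rule nonneg_on_circle_if_punctured)
  next
    case False
    then show ?thesis using off_a by (auto simp: nonneg_on_circle_def)
  qed
qed

lemma nonneg_on_circle_root_pair_dvd:
  assumes deg: "degree R \<le> 2 * d" and R: "nonneg_on_circle d R"
    and Ra: "poly R a = 0" and "a \<noteq> 0"
  shows "[:-a, 1:] * [:-inverse (cnj a), 1:] dvd R"
proof -
  define b where "b = inverse (cnj a)"
  have "b \<noteq> 0" using \<open>a \<noteq> 0\<close> by (simp add: b_def)
  have "poly R b = poly (conj_recip (2 * d) R) b"
    using conj_recip_eq_if_nonneg_on_circle[OF deg R] by simp
  also have "\<dots> = 0"
    using poly_conj_recip[OF _ \<open>b \<noteq> 0\<close>] deg Ra by (simp add: b_def)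
  finally have Rb: "poly R b = 0" .
  obtain R1 where R1: "R = [:-a, 1:] * R1"
    using Ra by (auto simp: poly_eq_0_iff_dvd elim: dvdE)
  have "poly R1 b = 0"
  proof (cases "b = a")
    case True
    then have "a * cnj a = 1" using \<open>a \<noteq> 0\<close> by (simp add: b_def field_simps)
    then have "of_real ((cmod a)\<^sup>2) = (1 :: complex)" by (simp only: complex_norm_square)
    then have "(cmod a)\<^sup>2 = 1" by (simp only: of_real_eq_1_iff)
    then have "cmod a = 1" using norm_ge_zero[of a] by (auto simp: power2_eq_1_iff)
    then have "poly (pderiv R) a = 0" using R Ra by (rule nonneg_on_circle_root_multiple)
    moreover have "poly (pderiv R) a = poly R1 a"
      unfolding R1 pderiv_mult by (simp add: pderiv_pCons)
    ultimately show ?thesis using True by simp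
  next
    case False
    then show ?thesis using Rb by (simp add: R1)
  qed
  then have "[:-b, 1:] dvd R1" by (simp add: poly_eq_0_iff_dvd)
  then show ?thesis unfolding R1 b_def by (rule mult_dvd_mono[OF dvd_refl])
qed

lemma coeff_top_if_nonneg_on_circle:
  assumes "degree R \<le> 2 * d" and "nonneg_on_circle d R"
  shows "coeff R (2 * d) = cnj (coeff R 0)"
  using arg_cong[OF conj_recip_eq_if_nonneg_on_circle[OF assms], of "\<lambda>p. coeff p (2 * d)"]
  by (simp add: coeff_conj_recip)

lemma nonneg_on_circle_factor_origin:
  assumes deg: "degree R \<le> 2 * Suc d" and R: "nonneg_on_circle (Suc d) R" and "coeff R 0 = 0"
  obtains R' where "degree R' \<le> 2 * d" and "R = pCons 0 R'"
proof -
  obtain R' where R': "R = pCons 0 R'"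
    using \<open>coeff R 0 = 0\<close> by (cases R) auto
  have "degree R \<noteq> 2 * Suc d"
  proof
    assume "degree R = 2 * Suc d"
    then have "lead_coeff R = 0"
      using coeff_top_if_nonneg_on_circle[OF deg R] \<open>coeff R 0 = 0\<close> by simp
    then have "R = 0" by (rule leading_coeff_0_iff[THEN iffD1])
    then show False using \<open>degree R = 2 * Suc d\<close> by simp
  qed
  then have "degree R' \<le> 2 * d"
    using deg unfolding R' by (cases "R' = 0") auto
  then show thesis using R' by (rule that)
qed

lemma nonneg_on_circle_factor_root_pair:
  assumes deg: "degree R \<le> 2 * Suc d" and R: "nonneg_on_circle (Suc d) R" and "coeff R 0 \<noteq> 0"
  obtains a R' where "degree R' \<le> 2 * d"
    and "\<And>z. cmod z = 1 \<Longrightarrow> poly R z / z ^ Suc d = of_real ((cmod (z - a))\<^sup>2) * (poly R' z / z ^ d)"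
proof -
  have "degree R = 2 * Suc d"
    using deg coeff_top_if_nonneg_on_circle[OF deg R] \<open>coeff R 0 \<noteq> 0\<close> le_degree[of R "2 * Suc d"]
    by simp
  then obtain a where Ra: "poly R a = 0"
    using fundamental_theorem_of_algebra[of R] constant_degree[of R] by auto
  have "a \<noteq> 0" using Ra \<open>coeff R 0 \<noteq> 0\<close> by (metis poly_0_coeff_0)
  obtain R2 where R2: "R = [:-a, 1:] * [:-inverse (cnj a), 1:] * R2"
    using nonneg_on_circle_root_pair_dvd[OF deg R Ra \<open>a \<noteq> 0\<close>] by (elim dvdE)
  have "R2 \<noteq> 0" using \<open>coeff R 0 \<noteq> 0\<close> R2 by auto
  then have "degree R = degree ([:-a, 1:] * [:-inverse (cnj a), 1:]) + degree R2"
    unfolding R2 by (intro degree_mult_eq) auto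
  also have "degree ([:-a, 1:] * [:-inverse (cnj a), 1:]) = 2"
    by (subst degree_mult_eq) auto
  finally have "degree (smult (- inverse (cnj a)) R2) \<le> 2 * d"
    using deg by simp
  moreover have "poly R z / z ^ Suc d
      = of_real ((cmod (z - a))\<^sup>2) * (poly (smult (- inverse (cnj a)) R2) z / z ^ d)"
    if z: "cmod z = 1" for z
  proof -
    have "z \<noteq> 0" using z by auto
    have sq: "of_real ((cmod (z - a))\<^sup>2) = (z - a) * (inverse z - cnj a)"
      by (simp only: complex_norm_square complex_cnj_diff unit_circle_cnj[OF z])
    (* hence (z - a) (z - 1 / cnj a) = - |z - a|^2 z / cnj a *)
    show ?thesis unfolding sq
      using \<open>z \<noteq> 0\<close> \<open>a \<noteq> 0\<close> by (simp add: R2 field_simps)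
  qed
  ultimately show thesis by (rule that)
qed

lemma nonneg_on_circle_factor:
  assumes deg: "degree R \<le> 2 * Suc d" and R: "nonneg_on_circle (Suc d) R"
  obtains a R' where "degree R' \<le> 2 * d"
    and "\<And>z. cmod z = 1 \<Longrightarrow> poly R z / z ^ Suc d = of_real ((cmod (z - a))\<^sup>2) * (poly R' z / z ^ d)"
proof (cases "coeff R 0 = 0")
  case True
  then obtain R' where "degree R' \<le> 2 * d" and "R = pCons 0 R'"
    using nonneg_on_circle_factor_origin[OF deg R] by blast
  then show thesis by (intro that[of R' 0]) auto
next
  case False
  then show thesis using nonneg_on_circle_factor_root_pair[OF deg R] that by blast
qed

theorem fejer_riesz:
  assumes "degree R \<le> 2 * d" and "nonneg_on_circle d R"
  shows "\<exists>Q. degree Q \<le> d \<and> (\<forall>z. cmod z = 1 \<longrightarrow> of_real ((cmod (poly Q z))\<^sup>2) = poly R z / z ^ d)"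
  using assms
proof (induction d arbitrary: R)
  case 0
  then have R: "poly R z = coeff R 0" for z
    by (simp add: poly_altdef)
  have "poly R 1 / 1 ^ 0 \<in> \<real>\<^sub>\<ge>\<^sub>0"
    using "0.prems"(2) norm_one unfolding nonneg_on_circle_def by blast
  then have "coeff R 0 \<in> \<real>\<^sub>\<ge>\<^sub>0" by (simp add: R)
  then obtain r where "r \<ge> 0" "coeff R 0 = of_real r"
    by (auto elim: nonneg_Reals_cases)
  then have "\<forall>z. cmod z = 1 \<longrightarrow> of_real ((cmod (poly [:of_real (sqrt r):] z))\<^sup>2) = poly R z / z ^ 0"
    by (simp add: R)
  then show ?case by (intro exI[of _ "[:of_real (sqrt r):]"]) simp
next
  case (Suc d)
  obtain a R' where deg': "degree R' \<le> 2 * d"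
    and eq: "\<And>z. cmod z = 1 \<Longrightarrow> poly R z / z ^ Suc d = of_real ((cmod (z - a))\<^sup>2) * (poly R' z / z ^ d)"
    using nonneg_on_circle_factor[OF Suc.prems] by blast
  have "nonneg_on_circle d R'"
    using Suc.prems(2) eq by (rule nonneg_on_circle_cancel_factor)
  then obtain Q' where "degree Q' \<le> d"
    and Q': "\<forall>z. cmod z = 1 \<longrightarrow> of_real ((cmod (poly Q' z))\<^sup>2) = poly R' z / z ^ d"
    using Suc.IH[OF deg'] by blast
  have "degree ([:-a, 1:] * Q') \<le> Suc d"
    using degree_mult_le[of "[:-a, 1:]" Q'] \<open>degree Q' \<le> d\<close> by simp
  moreover have "of_real ((cmod (poly ([:-a, 1:] * Q') z))\<^sup>2) = poly R z / z ^ Suc d"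
    if z: "cmod z = 1" for z
  proof -
    have "(cmod (poly ([:-a, 1:] * Q') z))\<^sup>2 = (cmod (z - a))\<^sup>2 * (cmod (poly Q' z))\<^sup>2"
      by (simp add: norm_mult power_mult_distrib flip: left_diff_distrib)
    then have "of_real ((cmod (poly ([:-a, 1:] * Q') z))\<^sup>2)
        = of_real ((cmod (z - a))\<^sup>2) * (of_real ((cmod (poly Q' z))\<^sup>2) :: complex)"
      by (simp only: of_real_mult)
    also have "\<dots> = poly R z / z ^ Suc d"
      using Q' eq[OF z] z by simp
    finally show ?thesis .
  qed
  ultimately show ?case by blast
qed

lemma complementary_poly_exists:
  assumes deg: "degree p \<le> d" and bounded: "\<And>z. cmod z = 1 \<Longrightarrow> cmod (poly p z) \<le> 1"
  obtains q where "degree q \<le> d"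
    and "\<And>z. cmod z = 1 \<Longrightarrow> (cmod (poly p z))\<^sup>2 + (cmod (poly q z))\<^sup>2 = 1"
proof -
  define R where "R = monom 1 d - p * conj_recip d p"
  have "degree R \<le> 2 * d"
    unfolding R_def using degree_mult_le[of p "conj_recip d p"] deg degree_conj_recip_le[of d p]
    by (intro degree_diff_le) (auto simp: degree_monom_eq)
  have R: "poly R z / z ^ d = of_real (1 - (cmod (poly p z))\<^sup>2)" if z: "cmod z = 1" for z
  proof -
    have "z \<noteq> 0" using z by auto
    then show ?thesis
      by (simp add: R_def poly_monom poly_conj_recip_unit_circle[OF deg z] field_simps
          flip: complex_norm_square[unfolded of_real_power])
  qed
  have "nonneg_on_circle d R"
    unfolding nonneg_on_circle_def
  proof (intro allI impI)
    fix z :: complex assume z: "cmod z = 1"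
    show "poly R z / z ^ d \<in> \<real>\<^sub>\<ge>\<^sub>0"
      unfolding R[OF z] nonneg_Reals_of_real_iff using bounded[OF z] by (simp add: abs_square_le_1)
  qed
  then obtain q where "degree q \<le> d"
    and q: "\<forall>z. cmod z = 1 \<longrightarrow> of_real ((cmod (poly q z))\<^sup>2) = poly R z / z ^ d"
    using fejer_riesz[OF \<open>degree R \<le> 2 * d\<close>] by blast
  show thesis
  proof (rule that[OF \<open>degree q \<le> d\<close>])
    fix z :: complex assume z: "cmod z = 1"
    have "of_real ((cmod (poly q z))\<^sup>2) = (of_real (1 - (cmod (poly p z))\<^sup>2) :: complex)"
      using q[rule_format, OF z] R[OF z] by (rule trans)
    then have "(cmod (poly q z))\<^sup>2 = 1 - (cmod (poly p z))\<^sup>2" by (simp only: of_real_eq_iff)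
    then show "(cmod (poly p z))\<^sup>2 + (cmod (poly q z))\<^sup>2 = 1" by simp
  qed
qed

section \<open>Quantum signal processing\<close>

lemma norm_sq_sum_eq_1_iff:
  "(cmod a)\<^sup>2 + (cmod b)\<^sup>2 = 1 \<longleftrightarrow> a * cnj a + b * cnj b = 1"
proof -
  have "a * cnj a + b * cnj b = of_real ((cmod a)\<^sup>2 + (cmod b)\<^sup>2)"
    by (simp only: of_real_add complex_norm_square)
  then show ?thesis by (simp only: of_real_eq_1_iff)
qed

lemma mmult_2: "mmult 2 A B r s = A r 0 * B 0 s + A r 1 * B 1 s"
  by (simp add: mmult_def numeral_2_eq_2)

definition su2 :: "complex \<Rightarrow> complex \<Rightarrow> cmat" where
  "su2 a b = (\<lambda>r s. if r = 0 \<and> s = 0 then a else if r = 0 \<and> s = 1 then - cnj b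
     else if r = 1 \<and> s = 0 then b else if r = 1 \<and> s = 1 then cnj a else 0)"

definition signal_op :: "complex \<Rightarrow> cmat" where
  "signal_op z = (\<lambda>r s. if r = s then (if r = 0 then z else 1) else 0)"

fun qsp_mat :: "cmat list \<Rightarrow> complex \<Rightarrow> cmat" where
  "qsp_mat [] z = idmat 2"
| "qsp_mat [R] z = R"
| "qsp_mat (R # Rs) z = mmult 2 R (mmult 2 (signal_op z) (qsp_mat Rs z))"

lemma unitary_su2:
  assumes "(cmod a)\<^sup>2 + (cmod b)\<^sup>2 = 1"
  shows "unitary_mat 2 (su2 a b)"
proof -
  have "a * cnj a + b * cnj b = 1"
    using assms by (simp only: norm_sq_sum_eq_1_iff)
  then have "(\<Sum>k<2. cnj (su2 a b k i) * su2 a b k j) = (if i = j then 1 else 0)"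
    if "i < 2" "j < 2" for i j
    using that by (auto simp: numeral_2_eq_2 less_Suc_eq su2_def algebra_simps)
  then show ?thesis unfolding unitary_mat_def by blast
qed

lemma coeff_mult_conj_recip_top:
  assumes "degree p \<le> m"
  shows "coeff (p * conj_recip m q) (2 * m) = coeff p m * cnj (coeff q 0)"
proof -
  have "coeff p i * coeff (conj_recip m q) (2 * m - i) = (if i = m then coeff p m * cnj (coeff q 0) else 0)"
    for i
    using assms by (cases i m rule: linorder_cases) (auto simp: coeff_conj_recip coeff_eq_0)
  then show ?thesis by (simp add: coeff_mult)
qed

lemma unit_circle_coeff_orthogonal:
  assumes dp: "degree p \<le> m" and dq: "degree q \<le> m" and "m \<ge> 1"
    and norm: "\<And>z. cmod z = 1 \<Longrightarrow> (cmod (poly p z))\<^sup>2 + (cmod (poly q z))\<^sup>2 = 1"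
  shows "coeff p m * cnj (coeff p 0) + coeff q m * cnj (coeff q 0) = 0"
proof -
  have "p * conj_recip m p + q * conj_recip m q = monom 1 m"
  proof (rule poly_eqI_unit_circle)
    fix z :: complex assume z: "cmod z = 1"
    have "poly p z * cnj (poly p z) + poly q z * cnj (poly q z) = 1"
      using norm[OF z] by (simp only: norm_sq_sum_eq_1_iff)
    then have "poly p z * (z ^ m * cnj (poly p z)) + poly q z * (z ^ m * cnj (poly q z)) = z ^ m"
      by (metis distrib_left mult.left_commute mult_1_right)
    then show "poly (p * conj_recip m p + q * conj_recip m q) z = poly (monom 1 m) z"
      by (simp add: poly_conj_recip_unit_circle[OF dp z] poly_conj_recip_unit_circle[OF dq z] poly_monom)
  qed
  from arg_cong[OF this, of "\<lambda>p. coeff p (2 * m)"] show ?thesis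
    using \<open>m \<ge> 1\<close> by (simp add: coeff_mult_conj_recip_top[OF dp] coeff_mult_conj_recip_top[OF dq])
qed

lemma normalize_pair:
  fixes s t :: complex
  assumes "s \<noteq> 0 \<or> t \<noteq> 0"
  obtains k :: real where "k > 0" and "(cmod (s / of_real k))\<^sup>2 + (cmod (t / of_real k))\<^sup>2 = 1"
proof
  let ?k = "sqrt ((cmod s)\<^sup>2 + (cmod t)\<^sup>2)"
  have pos: "(cmod s)\<^sup>2 + (cmod t)\<^sup>2 > 0" using assms by (simp add: sum_power2_gt_zero_iff)
  then show "?k > 0" by simp
  show "(cmod (s / of_real ?k))\<^sup>2 + (cmod (t / of_real ?k))\<^sup>2 = 1"
    using pos assms by (simp add: norm_divide power_divide add_divide_distrib[symmetric])
qed

lemma unit_pair_parallel_orthogonal: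
  assumes "u * cnj x + v * cnj y = 0"
  obtains a b where "(cmod a)\<^sup>2 + (cmod b)\<^sup>2 = 1" and "cnj a * x + cnj b * y = 0" and "a * v = b * u"
proof -
  obtain s t where st: "s \<noteq> 0 \<or> t \<noteq> 0" "cnj s * x + cnj t * y = 0" "s * v = t * u"
  proof (cases "u \<noteq> 0 \<or> v \<noteq> 0")
    case True
    have "cnj u * x + cnj v * y = cnj (u * cnj x + v * cnj y)" by simp
    then show thesis using that[of u v] True assms by (simp add: mult.commute)
  next
    case uv: False
    show thesis
    proof (cases "x \<noteq> 0 \<or> y \<noteq> 0")
      case True
      then show thesis using that[of "- cnj y" "cnj x"] uv by (auto simp: mult.commute)
    next
      case False
      then show thesis using that[of 1 0] uv by simp
    qed
  qed
  obtain k where "k > 0" and k: "(cmod (s / of_real k))\<^sup>2 + (cmod (t / of_real k))\<^sup>2 = 1"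
    using normalize_pair[OF st(1)] .
  show thesis
  proof (rule that[OF k])
    have "cnj (s / of_real k) * x + cnj (t / of_real k) * y = (cnj s * x + cnj t * y) / of_real k"
      by (simp add: add_divide_distrib)
    then show "cnj (s / of_real k) * x + cnj (t / of_real k) * y = 0"
      using st(2) by simp
    show "s / of_real k * v = t / of_real k * u"
      using st(3) by (simp add: field_simps)
  qed
qed

lemma su2_rotation_norm:
  "(cmod (cnj a * x + cnj b * y))\<^sup>2 + (cmod (a * y - b * x))\<^sup>2
    = ((cmod a)\<^sup>2 + (cmod b)\<^sup>2) * ((cmod x)\<^sup>2 + (cmod y)\<^sup>2)"
proof -
  have "complex_of_real ((cmod (cnj a * x + cnj b * y))\<^sup>2 + (cmod (a * y - b * x))\<^sup>2)
      = of_real (((cmod a)\<^sup>2 + (cmod b)\<^sup>2) * ((cmod x)\<^sup>2 + (cmod y)\<^sup>2))"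
    by (simp only: of_real_add of_real_mult complex_norm_square) (simp add: algebra_simps)
  then show ?thesis by (simp only: of_real_eq_iff)
qed

lemma su2_rotation_inverse:
  assumes "(cmod a)\<^sup>2 + (cmod b)\<^sup>2 = 1"
  shows "x = a * (cnj a * x + cnj b * y) - cnj b * (a * y - b * x)"
    and "y = b * (cnj a * x + cnj b * y) + cnj a * (a * y - b * x)"
proof -
  have unit: "a * cnj a + b * cnj b = 1" using assms by (simp only: norm_sq_sum_eq_1_iff)
  have "a * (cnj a * x + cnj b * y) - cnj b * (a * y - b * x) = (a * cnj a + b * cnj b) * x"
    by (simp add: algebra_simps)
  then show "x = a * (cnj a * x + cnj b * y) - cnj b * (a * y - b * x)" using unit by simp
  have "b * (cnj a * x + cnj b * y) + cnj a * (a * y - b * x) = (a * cnj a + b * cnj b) * y"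
    by (simp add: algebra_simps)
  then show "y = b * (cnj a * x + cnj b * y) + cnj a * (a * y - b * x)" using unit by simp
qed

lemma qsp_peel_layer:
  assumes dp: "degree p \<le> Suc d" and dq: "degree q \<le> Suc d"
    and unit_norm: "\<And>z. cmod z = 1 \<Longrightarrow> (cmod (poly p z))\<^sup>2 + (cmod (poly q z))\<^sup>2 = 1"
  obtains a b p' q' where "(cmod a)\<^sup>2 + (cmod b)\<^sup>2 = 1" and "degree p' \<le> d" and "degree q' \<le> d"
    and "\<And>z. cmod z = 1 \<Longrightarrow> (cmod (poly p' z))\<^sup>2 + (cmod (poly q' z))\<^sup>2 = 1"
    and "\<And>z. poly p z = a * (z * poly p' z) - cnj b * poly q' z"
    and "\<And>z. poly q z = b * (z * poly p' z) + cnj a * poly q' z"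
proof -
  (* Undoing su2 a b, with (a, b) parallel to the leading and orthogonal to the constant
     coefficients of (p, q), makes the first component divisible by z and lowers the degree
     of the second. *)
  obtain a b where ab: "(cmod a)\<^sup>2 + (cmod b)\<^sup>2 = 1"
    and bottom: "cnj a * coeff p 0 + cnj b * coeff q 0 = 0"
    and top: "a * coeff q (Suc d) = b * coeff p (Suc d)"
  proof (rule unit_pair_parallel_orthogonal)
    show "coeff p (Suc d) * cnj (coeff p 0) + coeff q (Suc d) * cnj (coeff q 0) = 0"
      by (rule unit_circle_coeff_orthogonal[OF dp dq]) (simp_all add: unit_norm)
  qed
  define f where "f = smult (cnj a) p + smult (cnj b) q"
  define q' where "q' = smult a q - smult b p"
  have "coeff f 0 = 0" using bottom by (simp add: f_def)
  then obtain p' where f: "f = pCons 0 p'" by (cases f) auto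
  have pf: "cnj a * poly p z + cnj b * poly q z = z * poly p' z" for z
    using arg_cong[OF f, of "\<lambda>r. poly r z"] by (simp add: f_def)
  have q': "a * poly q z - b * poly p z = poly q' z" for z
    by (simp add: q'_def)
  have "degree f \<le> Suc d"
    unfolding f_def using dp dq by (intro degree_add_le) (auto intro: order.trans[OF degree_smult_le])
  then have "degree p' \<le> d"
    unfolding f by (cases "p' = 0") auto
  moreover have "degree q' \<le> d"
  proof (rule degree_le, intro allI impI)
    fix k assume "d < k"
    then consider "k = Suc d" | "Suc d < k" by linarith
    then show "coeff q' k = 0"
      using top dp dq by cases (auto simp: q'_def coeff_eq_0)
  qed
  moreover have "(cmod (poly p' z))\<^sup>2 + (cmod (poly q' z))\<^sup>2 = 1" if z: "cmod z = 1" for z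
  proof -
    have "cmod (poly p' z) = cmod (cnj a * poly p z + cnj b * poly q z)"
      using z by (simp add: pf norm_mult)
    then show ?thesis
      using su2_rotation_norm[of a "poly p z" b "poly q z"] ab unit_norm[OF z] by (simp add: q')
  qed
  moreover have "poly p z = a * (z * poly p' z) - cnj b * poly q' z" for z
    using su2_rotation_inverse(1)[OF ab, of "poly p z" "poly q z"] by (simp only: pf q')
  moreover have "poly q z = b * (z * poly p' z) + cnj a * poly q' z" for z
    using su2_rotation_inverse(2)[OF ab, of "poly q z" "poly p z"] by (simp only: pf q')
  ultimately show thesis using that ab by blast
qed

theorem qsp_exists:
  assumes "degree p \<le> d" and "degree q \<le> d"
    and "\<And>z. cmod z = 1 \<Longrightarrow> (cmod (poly p z))\<^sup>2 + (cmod (poly q z))\<^sup>2 = 1"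
  shows "\<exists>Rs. length Rs = Suc d \<and> (\<forall>R\<in>set Rs. unitary_mat 2 R) \<and>
    (\<forall>z. qsp_mat Rs z 0 0 = poly p z \<and> qsp_mat Rs z 1 0 = poly q z)"
  using assms
proof (induction d arbitrary: p q)
  case 0
  then have "poly p z = coeff p 0" "poly q z = coeff q 0" for z
    by (simp_all add: poly_altdef)
  moreover from this have "unitary_mat 2 (su2 (coeff p 0) (coeff q 0))"
    using "0.prems"(3)[of 1] by (intro unitary_su2) simp
  ultimately show ?case
    by (intro exI[of _ "[su2 (coeff p 0) (coeff q 0)]"]) (simp add: su2_def)
next
  case (Suc d)
  obtain a b p' q' where ab: "(cmod a)\<^sup>2 + (cmod b)\<^sup>2 = 1" and "degree p' \<le> d" "degree q' \<le> d"
    and "\<And>z. cmod z = 1 \<Longrightarrow> (cmod (poly p' z))\<^sup>2 + (cmod (poly q' z))\<^sup>2 = 1"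
    and p: "\<And>z. poly p z = a * (z * poly p' z) - cnj b * poly q' z"
    and q: "\<And>z. poly q z = b * (z * poly p' z) + cnj a * poly q' z"
    using qsp_peel_layer[OF Suc.prems] by blast
  then obtain Rs where Rs: "length Rs = Suc d" "\<forall>R\<in>set Rs. unitary_mat 2 R"
    "\<forall>z. qsp_mat Rs z 0 0 = poly p' z \<and> qsp_mat Rs z 1 0 = poly q' z"
    using Suc.IH by blast
  then obtain R Rs' where "Rs = R # Rs'" by (cases Rs) auto
  then have "qsp_mat (su2 a b # Rs) z = mmult 2 (su2 a b) (mmult 2 (signal_op z) (qsp_mat Rs z))" for z
    by simp
  then have "qsp_mat (su2 a b # Rs) z 0 0 = poly p z \<and> qsp_mat (su2 a b # Rs) z 1 0 = poly q z" for z
    using Rs(3) by (simp add: mmult_2 su2_def signal_op_def p q)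
  then show ?case
    using Rs(1,2) unitary_su2[OF ab] by (intro exI[of _ "su2 a b # Rs"]) auto
qed

section \<open>Multiplexors on the ancilla qubit\<close>

lemma qbit_eq_of_bool: "qbit x i = of_bool (bit x i)"
  by (simp add: qbit_def bit_iff_odd mod2_eq_if)

lemma qbit_less_2: "qbit x i < 2"
  by (simp add: qbit_def)

lemma mod_eq_iff_qbits: "(x::nat) mod 2 ^ n = y mod 2 ^ n \<longleftrightarrow> (\<forall>i<n. qbit x i = qbit y i)"
  by (auto simp: qbit_eq_of_bool bit_eq_iff[of "take_bit n x"] bit_take_bit_iff simp flip: take_bit_eq_mod)

lemma eq_iff_qbits: "(x::nat) = y \<longleftrightarrow> (\<forall>i. qbit x i = qbit y i)"
proof -
  have "x < 2 ^ (x + y)" "y < 2 ^ (x + y)" using less_exp[of "x + y"] by linarith+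
  then have "x mod 2 ^ (x + y) = x" "y mod 2 ^ (x + y) = y" by simp_all
  then show ?thesis using mod_eq_iff_qbits[of x "x + y" y] by auto
qed

lemma qbit_mod: "i < n \<Longrightarrow> qbit (x mod 2 ^ n) i = qbit x i"
  by (simp add: qbit_eq_of_bool bit_take_bit_iff flip: take_bit_eq_mod)

lemma qbit_top: "x < 2 ^ Suc n \<Longrightarrow> qbit x n = x div 2 ^ n"
  by (simp add: qbit_def less_mult_imp_div_less)

lemma qbit_above: "x < 2 ^ Suc n \<Longrightarrow> n < i \<Longrightarrow> qbit x i = 0"
proof -
  assume "x < 2 ^ Suc n" "n < i"
  then have "x < 2 ^ i" using power_increasing[of "Suc n" i "2::nat"] by simp
  then show ?thesis by (simp add: qbit_def)
qed

(* A basis index x < 2^(n+1) is 2^n a + j with ancilla bit a and system index j; M is the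
   block-diagonal matrix that acts on the ancilla as W j while the system is in state |j>. *)
definition multiplexor :: "nat \<Rightarrow> cmat \<Rightarrow> (nat \<Rightarrow> cmat) \<Rightarrow> bool" where
  "multiplexor n M W \<longleftrightarrow> (\<forall>x y. M x y =
     (if x < 2 ^ Suc n \<and> y < 2 ^ Suc n \<and> x mod 2 ^ n = y mod 2 ^ n
      then W (x mod 2 ^ n) (x div 2 ^ n) (y div 2 ^ n) else 0))"

lemma div_less_2: "(x::nat) < 2 ^ Suc n \<Longrightarrow> x div 2 ^ n < 2"
  by (simp add: less_mult_imp_div_less)

lemma multiplexor_cong:
  assumes "multiplexor n M W" and "\<And>j a b. j < 2 ^ n \<Longrightarrow> a < 2 \<Longrightarrow> b < 2 \<Longrightarrow> W j a b = W' j a b"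
  shows "multiplexor n M W'"
  using assms div_less_2 unfolding multiplexor_def by auto

lemma multiplexor_diagonal:
  assumes M: "\<And>x y. M x y = (if x = y \<and> x < 2 ^ Suc n then W (x mod 2 ^ n) (x div 2 ^ n) (x div 2 ^ n) else 0)"
    and diag: "\<And>j a b. a \<noteq> b \<Longrightarrow> W j a b = 0"
  shows "multiplexor n M W"
  unfolding multiplexor_def
proof (intro allI)
  fix x y :: nat
  have "x = y \<longleftrightarrow> x mod 2 ^ n = y mod 2 ^ n \<and> x div 2 ^ n = y div 2 ^ n"
    by (metis div_mult_mod_eq)
  then show "M x y = (if x < 2 ^ Suc n \<and> y < 2 ^ Suc n \<and> x mod 2 ^ n = y mod 2 ^ n
      then W (x mod 2 ^ n) (x div 2 ^ n) (y div 2 ^ n) else 0)"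
    using M diag by auto
qed

lemma multiplexor_idmat: "multiplexor n (idmat (2 ^ Suc n)) (\<lambda>j. idmat 2)"
  by (rule multiplexor_diagonal) (auto simp: idmat_def div_less_2)

lemma multiplexor_G1_ancilla: "multiplexor n (gate_mat (Suc n) (G1 n U)) (\<lambda>j. U)"
  unfolding multiplexor_def
proof (intro allI)
  fix x y :: nat
  show "gate_mat (Suc n) (G1 n U) x y = (if x < 2 ^ Suc n \<and> y < 2 ^ Suc n \<and> x mod 2 ^ n = y mod 2 ^ n
      then U (x div 2 ^ n) (y div 2 ^ n) else 0)"
  proof (cases "x < 2 ^ Suc n \<and> y < 2 ^ Suc n")
    case True
    then have "(\<forall>i. i \<noteq> n \<longrightarrow> qbit x i = qbit y i) \<longleftrightarrow> (\<forall>i<n. qbit x i = qbit y i)"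
      using qbit_above by (metis less_not_refl linorder_neqE_nat)
    then show ?thesis using True by (auto simp: mod_eq_iff_qbits qbit_top)
  qed auto
qed

lemma gate_mat_G2_diagonal:
  assumes diag: "\<And>r s. r \<noteq> s \<Longrightarrow> U r s = 0" and "q1 \<noteq> q2"
  shows "gate_mat m (G2 q1 q2 U) x y =
    (if x = y \<and> x < 2 ^ m then U (2 * qbit x q1 + qbit x q2) (2 * qbit x q1 + qbit x q2) else 0)"
proof (cases "x = y")
  case False
  have "2 * qbit x q1 + qbit x q2 \<noteq> 2 * qbit y q1 + qbit y q2"
    if "\<forall>i. i \<noteq> q1 \<and> i \<noteq> q2 \<longrightarrow> qbit x i = qbit y i"
  proof
    assume "2 * qbit x q1 + qbit x q2 = 2 * qbit y q1 + qbit y q2"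
    then have "qbit x q1 = qbit y q1 \<and> qbit x q2 = qbit y q2"
      using qbit_less_2[of x q2] qbit_less_2[of y q2] by presburger
    then show False using that False eq_iff_qbits by metis
  qed
  then show ?thesis using False diag by auto
qed simp

(* Indexed by 2 a + b for the first qubit a and the second qubit b: the phase is applied
   exactly when a = 0 and b = 1. *)
definition ctrl_phase :: "complex \<Rightarrow> cmat" where
  "ctrl_phase ph = (\<lambda>r s. if r = s then (if r = 1 then ph else 1) else 0)"

lemma multiplexor_ctrl_phase:
  assumes "i < n"
  shows "multiplexor n (gate_mat (Suc n) (G2 n i (ctrl_phase ph)))
    (\<lambda>j. signal_op (if qbit j i = 1 then ph else 1))"
proof (rule multiplexor_diagonal)
  have phase: "ctrl_phase ph (2 * qbit x n + qbit x i) (2 * qbit x n + qbit x i)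
      = signal_op (if qbit (x mod 2 ^ n) i = 1 then ph else 1) (x div 2 ^ n) (x div 2 ^ n)"
    if "x < 2 ^ Suc n" for x
    using that qbit_less_2[of x i] div_less_2[OF that]
    by (auto simp: qbit_top qbit_mod[OF assms] ctrl_phase_def signal_op_def less_2_cases_iff)
  fix x y :: nat
  have "gate_mat (Suc n) (G2 n i (ctrl_phase ph)) x y = (if x = y \<and> x < 2 ^ Suc n
      then ctrl_phase ph (2 * qbit x n + qbit x i) (2 * qbit x n + qbit x i) else 0)"
    by (rule gate_mat_G2_diagonal) (use assms in \<open>auto simp: ctrl_phase_def\<close>)
  then show "gate_mat (Suc n) (G2 n i (ctrl_phase ph)) x y = (if x = y \<and> x < 2 ^ Suc n
      then signal_op (if qbit (x mod 2 ^ n) i = 1 then ph else 1) (x div 2 ^ n) (x div 2 ^ n) else 0)"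
    using phase by (simp del: gate_mat.simps)
qed (simp add: signal_op_def)

lemma multiplexor_mmult:
  assumes A: "multiplexor n A WA" and B: "multiplexor n B WB"
  shows "multiplexor n (mmult (2 ^ Suc n) A B) (\<lambda>j. mmult 2 (WA j) (WB j))"
  unfolding multiplexor_def
proof (intro allI)
  fix x y :: nat
  define N :: nat where "N = 2 ^ n"
  let ?t = "\<lambda>k. A x k * B k y"
  have AB: "?t k = (if x < 2 * N \<and> y < 2 * N \<and> k < 2 * N \<and> x mod N = k mod N \<and> k mod N = y mod N
      then WA (x mod N) (x div N) (k div N) * WB (y mod N) (k div N) (y div N) else 0)" for k
    using A B unfolding multiplexor_def N_def by auto
  have "mmult (2 * N) A B x y = (if x < 2 * N \<and> y < 2 * N \<and> x mod N = y mod N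
      then mmult 2 (WA (x mod N)) (WB (x mod N)) (x div N) (y div N) else 0)"
  proof (cases "x < 2 * N \<and> y < 2 * N \<and> x mod N = y mod N")
    case True
    define j where "j = x mod N"
    have jx: "x mod N = j" and jy: "y mod N = j" and "j < N"
      using True by (simp_all add: j_def N_def)
    have zero: "?t k = 0" if "k < 2 * N" "k \<notin> {j, j + N}" for k
    proof -
      have "k div N = 0 \<or> k div N = 1" using that(1) div_less_2[of k n] unfolding N_def by auto
      then have "k mod N \<noteq> j" using div_mult_mod_eq[of k N] that(2) by fastforce
      then show ?thesis by (simp add: AB jx)
    qed
    have "(\<Sum>k<2 * N. ?t k) = (\<Sum>k\<in>{j, j + N}. ?t k)"
      using \<open>j < N\<close> zero by (intro sum.mono_neutral_right) simp_all
    also have "\<dots> = mmult 2 (WA j) (WB j) (x div N) (y div N)"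
      using True \<open>j < N\<close> by (simp add: AB mmult_2 jx jy)
    finally show ?thesis using True by (simp add: mmult_def jx)
  next
    case False
    then have "?t k = 0" for k by (auto simp: AB)
    then have "(\<Sum>k<2 * N. ?t k) = 0" by (simp only: sum.neutral_const)
    then show ?thesis using False by (auto simp: mmult_def)
  qed
  then show "mmult (2 ^ Suc n) A B x y = (if x < 2 ^ Suc n \<and> y < 2 ^ Suc n \<and> x mod 2 ^ n = y mod 2 ^ n
      then mmult 2 (WA (x mod 2 ^ n)) (WB (x mod 2 ^ n)) (x div 2 ^ n) (y div 2 ^ n) else 0)"
    by (simp add: N_def)
qed

definition signal_circuit :: "nat \<Rightarrow> gate list" where
  "signal_circuit n = map (\<lambda>i. G2 n i (ctrl_phase (omega (2 ^ n) ^ 2 ^ i))) [0..<n]"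

(* Gates act in list order, so R, the leftmost factor of qsp_mat, comes last. *)
fun qsp_circuit :: "nat \<Rightarrow> cmat list \<Rightarrow> gate list" where
  "qsp_circuit n [] = []"
| "qsp_circuit n [R] = [G1 n R]"
| "qsp_circuit n (R # R' # Rs) = qsp_circuit n (R' # Rs) @ signal_circuit n @ [G1 n R]"

abbreviation apply_gates :: "nat \<Rightarrow> cmat \<Rightarrow> gate list \<Rightarrow> cmat" where
  "apply_gates m \<equiv> foldl (\<lambda>M g. mmult (2 ^ m) (gate_mat m g) M)"

lemma circuit_mat_append: "circuit_mat m (gs @ hs) = apply_gates m (circuit_mat m gs) hs"
  by (simp add: circuit_mat_def)

lemma signal_op_mmult: "mmult 2 (signal_op x) (mmult 2 (signal_op y) M) = mmult 2 (signal_op (x * y)) M"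
  by (intro ext) (simp add: mmult_2 signal_op_def)

lemma multiplexor_ctrl_phases:
  assumes "\<forall>i\<in>set is. i < n" and "multiplexor n M W"
  shows "multiplexor n (apply_gates (Suc n) M (map (\<lambda>i. G2 n i (ctrl_phase (ph i))) is))
    (\<lambda>j. mmult 2 (signal_op (\<Prod>i\<leftarrow>is. if qbit j i = 1 then ph i else 1)) (W j))"
  using assms
proof (induction "is" arbitrary: M W)
  case Nil
  then show ?case
    by (auto elim!: multiplexor_cong simp: mmult_2 signal_op_def less_2_cases_iff)
next
  case (Cons i "is")
  have "multiplexor n (mmult (2 ^ Suc n) (gate_mat (Suc n) (G2 n i (ctrl_phase (ph i)))) M)
     (\<lambda>j. mmult 2 (signal_op (if qbit j i = 1 then ph i else 1)) (W j))"
    using Cons.prems by (intro multiplexor_mmult multiplexor_ctrl_phase) auto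
  from Cons.IH[OF _ this] Cons.prems(1) show ?case
    by (simp add: signal_op_mmult mult.commute)
qed

lemma prod_qbits_power:
  "(\<Prod>i\<leftarrow>[0..<n]. if qbit j i = 1 then w ^ 2 ^ i else 1) = w ^ (j mod 2 ^ n)"
proof (induction n)
  case (Suc n)
  have "j mod 2 ^ Suc n = j mod 2 ^ n + 2 ^ n * qbit j n"
    unfolding qbit_def power_Suc2 by (simp add: mod_mult2_eq)
  then show ?case
    using Suc qbit_less_2[of j n] by (auto simp: less_2_cases_iff power_add power_mult)
qed simp

lemma multiplexor_signal_circuit:
  assumes "multiplexor n M W"
  shows "multiplexor n (apply_gates (Suc n) M (signal_circuit n))
    (\<lambda>j. mmult 2 (signal_op (omega (2 ^ n) ^ j)) (W j))"
proof -
  have "multiplexor n (apply_gates (Suc n) M (signal_circuit n))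
    (\<lambda>j. mmult 2 (signal_op (\<Prod>i\<leftarrow>[0..<n]. if qbit j i = 1 then omega (2 ^ n) ^ 2 ^ i else 1)) (W j))"
    unfolding signal_circuit_def using assms by (intro multiplexor_ctrl_phases) auto
  then show ?thesis
    by (rule multiplexor_cong) (simp only: prod_qbits_power mod_less)
qed

lemma multiplexor_qsp_circuit:
  "Rs \<noteq> [] \<Longrightarrow> multiplexor n (circuit_mat (Suc n) (qsp_circuit n Rs)) (\<lambda>j. qsp_mat Rs (omega (2 ^ n) ^ j))"
proof (induction n Rs rule: qsp_circuit.induct)
  case (2 n R)
  have "multiplexor n (mmult (2 ^ Suc n) (gate_mat (Suc n) (G1 n R)) (idmat (2 ^ Suc n)))
      (\<lambda>j. mmult 2 R (idmat 2))"
    by (intro multiplexor_mmult multiplexor_G1_ancilla multiplexor_idmat)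
  then show ?case
    by (auto elim!: multiplexor_cong simp: circuit_mat_def mmult_2 idmat_def less_2_cases_iff)
next
  case (3 n R R' Rs)
  then have "multiplexor n (circuit_mat (Suc n) (qsp_circuit n (R' # Rs)))
      (\<lambda>j. qsp_mat (R' # Rs) (omega (2 ^ n) ^ j))" by simp
  then have "multiplexor n (mmult (2 ^ Suc n) (gate_mat (Suc n) (G1 n R))
      (apply_gates (Suc n) (circuit_mat (Suc n) (qsp_circuit n (R' # Rs))) (signal_circuit n)))
    (\<lambda>j. mmult 2 R (mmult 2 (signal_op (omega (2 ^ n) ^ j)) (qsp_mat (R' # Rs) (omega (2 ^ n) ^ j))))"
    by (intro multiplexor_mmult multiplexor_G1_ancilla multiplexor_signal_circuit)
  then show ?case by (simp add: circuit_mat_append del: gate_mat.simps)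
qed simp

lemma norm_omega_power: "cmod (omega N ^ k) = 1"
proof -
  have "omega N = exp (\<i> * of_real (2 * pi / real N))"
    unfolding omega_def by (simp add: field_simps)
  then show ?thesis by (simp add: norm_power)
qed

lemma unitary_ctrl_phase:
  assumes "cmod ph = 1"
  shows "unitary_mat 4 (ctrl_phase ph)"
proof -
  have "cnj ph * ph = 1" using assms complex_norm_square[of ph] by (simp add: mult.commute)
  then show ?thesis by (auto simp: unitary_mat_def ctrl_phase_def numeral_eq_Suc lessThan_Suc)
qed

lemma valid_qsp_circuit:
  assumes "\<forall>R\<in>set Rs. unitary_mat 2 R"
  shows "\<forall>g\<in>set (qsp_circuit n Rs). valid_gate (Suc n) g"
  using assms
proof (induction n Rs rule: qsp_circuit.induct)
  case (3 n R R' Rs)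
  have "\<forall>g\<in>set (signal_circuit n). valid_gate (Suc n) g"
    by (auto simp: signal_circuit_def norm_omega_power unitary_ctrl_phase)
  with 3 show ?case by auto
qed auto

lemma length_qsp_circuit: "length (qsp_circuit n Rs) = length Rs + (length Rs - 1) * n"
  by (induction n Rs rule: qsp_circuit.induct) (auto simp: signal_circuit_def)

section \<open>Block encoding of polynomials in U_omega\<close>

lemma mpow_U_omega: "mpow D (U_omega D) k i j = (if i = j \<and> i < D then (omega D ^ i) ^ k else 0)"
  by (induction k arbitrary: i j) (auto simp: idmat_def mmult_def U_omega_def if_distrib[of "\<lambda>x. _ * x"] cong: if_cong)

lemma poly_mat_U_omega:
  "poly_mat D P (U_omega D) i j = (if i = j \<and> i < D then poly P (omega D ^ i) else 0)"
proof (cases "i = j \<and> i < D")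
  case True
  then show ?thesis by (simp add: poly_mat_def mpow_U_omega poly_altdef)
next
  case False
  then show ?thesis unfolding poly_mat_def mpow_U_omega if_not_P[OF False] by simp
qed

lemma poly_mat_smult: "poly_mat D (smult a P) M i j = a * poly_mat D P M i j"
  by (cases "a = 0") (simp_all add: poly_mat_def sum_distrib_left mult.assoc)

lemma qsp_gate_count_le: "n \<ge> 1 \<Longrightarrow> real (Suc d + d * n) \<le> 2 * real (d + 1) * real n"
proof -
  assume "n \<ge> 1"
  then have "Suc d + d * n \<le> 2 * (d + 1) * n" by (cases n) (auto simp: algebra_simps)
  then have "real (Suc d + d * n) \<le> real (2 * (d + 1) * n)" by (simp only: of_nat_le_iff)
  then show ?thesis by (simp add: algebra_simps)
qed

lemma bounded_poly_circuit_exists: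
  assumes "degree p \<le> d" and "\<And>z. cmod z = 1 \<Longrightarrow> cmod (poly p z) \<le> 1"
  obtains gs where "\<forall>g\<in>set gs. valid_gate (Suc n) g" and "length gs = Suc d + d * n"
    and "top_left_block n (circuit_mat (Suc n) gs) (poly_mat (2 ^ n) p (U_omega (2 ^ n)))"
proof -
  obtain q where "degree q \<le> d" and "\<And>z. cmod z = 1 \<Longrightarrow> (cmod (poly p z))\<^sup>2 + (cmod (poly q z))\<^sup>2 = 1"
    using complementary_poly_exists assms by blast
  then obtain Rs where Rs: "length Rs = Suc d" "\<forall>R\<in>set Rs. unitary_mat 2 R"
    "\<forall>z. qsp_mat Rs z 0 0 = poly p z"
    using qsp_exists[OF \<open>degree p \<le> d\<close>] by blast
  have "multiplexor n (circuit_mat (Suc n) (qsp_circuit n Rs)) (\<lambda>j. qsp_mat Rs (omega (2 ^ n) ^ j))"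
    using Rs(1) by (intro multiplexor_qsp_circuit) auto
  then have "top_left_block n (circuit_mat (Suc n) (qsp_circuit n Rs)) (poly_mat (2 ^ n) p (U_omega (2 ^ n)))"
    using Rs(3) by (auto simp: top_left_block_def multiplexor_def poly_mat_U_omega)
  then show thesis
    using Rs(1,2) by (intro that[of "qsp_circuit n Rs"]) (simp_all add: valid_qsp_circuit length_qsp_circuit)
qed

theorem theorem10:
  shows "\<exists>C::real. \<forall>(n::nat) (d::nat) (P::complex poly) (c::real).
     n \<ge> 1 \<and> degree P = d \<and> c > 0 \<and>
     (\<forall>x::complex. cmod x = 1 \<longrightarrow> (cmod (poly P x))\<^sup>2 \<le> c) \<longrightarrow>
     (\<exists>gs::gate list.
        (\<forall>g\<in>set gs. valid_gate (n + 1) g) \<and>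
        real (length gs) \<le> C * real (d + 1) * real n \<and>
        top_left_block n (circuit_mat (n + 1) gs)
          (\<lambda>j k. poly_mat (2 ^ n) P (U_omega (2 ^ n)) j k / complex_of_real (sqrt c)))"
proof (intro exI[of _ 2] allI impI, elim conjE)
  fix n d :: nat and P :: "complex poly" and c :: real
  assume "n \<ge> 1" "degree P = d" "c > 0" and bound: "\<forall>x. cmod x = 1 \<longrightarrow> (cmod (poly P x))\<^sup>2 \<le> c"
  define p where "p = smult (of_real (inverse (sqrt c))) P"
  have "degree p \<le> d" using \<open>degree P = d\<close> by (simp add: p_def)
  moreover have "cmod (poly p z) \<le> 1" if "cmod z = 1" for z
  proof -
    have "cmod (poly P z) \<le> sqrt c" using bound that by (simp add: real_le_rsqrt)
    then show ?thesis using \<open>c > 0\<close> by (simp add: p_def norm_mult norm_divide field_simps)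
  qed
  ultimately obtain gs where "\<forall>g\<in>set gs. valid_gate (Suc n) g" and "length gs = Suc d + d * n"
    and "top_left_block n (circuit_mat (Suc n) gs) (poly_mat (2 ^ n) p (U_omega (2 ^ n)))"
    by (rule bounded_poly_circuit_exists)
  then show "\<exists>gs. (\<forall>g\<in>set gs. valid_gate (n + 1) g) \<and> real (length gs) \<le> 2 * real (d + 1) * real n \<and>
      top_left_block n (circuit_mat (n + 1) gs)
        (\<lambda>j k. poly_mat (2 ^ n) P (U_omega (2 ^ n)) j k / of_real (sqrt c))"
    using qsp_gate_count_le[OF \<open>n \<ge> 1\<close>, of d]
    by (auto simp: top_left_block_def p_def poly_mat_smult divide_inverse mult.commute)
qed

end
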